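(* Let $V$ be a finite-dimensional vector space over $k$ with basis $\xi_1,\dots,\xi_n$, and let $W(V)$ be the Lie algebra of $k$-linear derivations of $k[\xi_1,\dots,\xi_n]=\mathrm{Sym}(V)$, with elements $f\partial_i$ and bracket $[f\partial_i,g\partial_j]=f\frac{\partial g}{\partial\xi_i}\partial_j-g\frac{\partial f}{\partial\xi_j}\partial_i$. Let $M$ be a vector space, $\mu:W(V)\otimes M\to M$ linear, and let $a:\mathrm{Sym}(V)\otimes M\to V\otimes M$ correspond to $\mu$ via $a(f\otimes x)=\sum_{i=1}^n\xi_i\otimes\mu(f\partial_i\otimes x)$. Then $\mu$ defines a representation of the Lie algebra $W(V)$ on $M$ if and only if $[a_1,a_2]=a'-a''$ as maps $\mathrm{Sym}(V)\otimes\mathrm{Sym}(V)\otimes M\to V\otimes V\otimes M$.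
   Context: Notation: $\tau$ denotes the symmetry swapping the first two tensor factors (of whatever type). $a_2=\mathrm{id}_{\mathrm{Sym}V}\otimes a$ and $a_1=\tau(\mathrm{id}\otimes a)\tau$, so that $a_1a_2$ and $a_2a_1$ are both maps $\mathrm{Sym}V\otimes\mathrm{Sym}V\otimes M\to V\otimes V\otimes M$, and $[a_1,a_2]=a_1a_2-a_2a_1$. $\Delta:\mathrm{Sym}V\to V\otimes\mathrm{Sym}V$ is $f\mapsto\sum_i\xi_i\otimes\partial f/\partial\xi_i$ and $m:\mathrm{Sym}V\otimes\mathrm{Sym}V\to\mathrm{Sym}V$ is multiplication. $a'$ is the composite $\mathrm{Sym}V\otimes\mathrm{Sym}V\otimes M\xrightarrow{\mathrm{id}\otimes\Delta\otimes\mathrm{id}}\mathrm{Sym}V\otimes V\otimes\mathrm{Sym}V\otimes M\xrightarrow{\tau\otimes\mathrm{id}\otimes\mathrm{id}}V\otimes\mathrm{Sym}V\otimes\mathrm{Sym}V\otimes M\xrightarrow{\mathrm{id}\otimes m\otimes\mathrm{id}}V\otimes\mathrm{Sym}V\otimes M\xrightarrow{\mathrm{id}\otimes a}V\otimes V\otimes M$, and $a''=\tau a'\tau$. A representation means $\mu([X,Y]\otimes x)=\mu(X\otimes\mu(Y\otimes x))-\mu(Y\otimes\mu(X\otimes x))$. *)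

theory Defs
  imports Main HOL.Vector_Spaces "HOL-Library.Poly_Mapping" "HOL-Library.Function_Algebras"
begin

(* V = k^'n with basis xi_i (i :: 'n, 'n a finite index type).
   Sym(V) = k[xi_i] : finitely supported coefficient functions on monomials. *)
type_synonym 'n mon = "'n \<Rightarrow>\<^sub>0 nat"
type_synonym ('n,'k) sym = "'n mon \<Rightarrow>\<^sub>0 'k"

definition monom :: "'n mon \<Rightarrow> ('n,'k::comm_ring_1) sym" where
  "monom m = Poly_Mapping.single m 1"

definition pd :: "'n \<Rightarrow> ('n,'k::comm_ring_1) sym \<Rightarrow> ('n,'k) sym" where
  "pd i p = Abs_poly_mapping (\<lambda>q::'n mon. of_nat (Poly_Mapping.lookup q i + 1) * Poly_Mapping.lookup p (q + Poly_Mapping.single i (1::nat)))"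

definition kscale :: "'k::comm_ring_1 \<Rightarrow> ('n,'k) sym \<Rightarrow> ('n,'k) sym" where
  "kscale c p = Poly_Mapping.map (\<lambda>a. c * a) p"

(* W(V): elements sum_i X_i d_i, represented by the coefficient family X *)
definition vf :: "('n,'k::comm_ring_1) sym \<Rightarrow> 'n \<Rightarrow> ('n \<Rightarrow> ('n,'k) sym)" where
  "vf f i = (\<lambda>j. if j = i then f else 0)"

definition genbr :: "('n,'k::comm_ring_1) sym \<Rightarrow> 'n \<Rightarrow> ('n,'k) sym \<Rightarrow> 'n \<Rightarrow> ('n \<Rightarrow> ('n,'k) sym)" where
  "genbr f i g j = (\<lambda>l. (if l = j then f * pd i g else 0) - (if l = i then g * pd j f else 0))"

definition wbracket :: "('n::finite \<Rightarrow> ('n,'k::comm_ring_1) sym) \<Rightarrow> ('n \<Rightarrow> ('n,'k) sym) \<Rightarrow> ('n \<Rightarrow> ('n,'k) sym)" where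
  "wbracket X Y = (\<lambda>l. \<Sum>i\<in>UNIV. \<Sum>j\<in>UNIV. genbr (X i) i (Y j) j l)"

(* mu : W(V) (x) M -> M linear  <->  mu bilinear as a map W(V) x M -> M *)
definition bilinear_mu :: "('k::field \<Rightarrow> 'm::ab_group_add \<Rightarrow> 'm) \<Rightarrow> (('n \<Rightarrow> ('n,'k) sym) \<Rightarrow> 'm \<Rightarrow> 'm) \<Rightarrow> bool" where
  "bilinear_mu smul mu \<longleftrightarrow>
     (\<forall>X Y x. mu (\<lambda>j. X j + Y j) x = mu X x + mu Y x) \<and>
     (\<forall>c X x. mu (\<lambda>j. kscale c (X j)) x = smul c (mu X x)) \<and>
     (\<forall>X x y. mu X (x + y) = mu X x + mu X y) \<and>
     (\<forall>c X x. mu X (smul c x) = smul c (mu X x))"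

definition is_representation :: "(('n::finite \<Rightarrow> ('n,'k::field) sym) \<Rightarrow> 'm::ab_group_add \<Rightarrow> 'm) \<Rightarrow> bool" where
  "is_representation mu \<longleftrightarrow>
     (\<forall>X Y x. mu (wbracket X Y) x = mu X (mu Y x) - mu Y (mu X x))"

(* Tensor products, via the monomial basis of Sym(V) and the basis xi_i of V:
     Sym(V) (x) N  =  'n mon \<Rightarrow>\<^sub>0 N      (sum_m xi^m (x) T_m)
     V (x) N       =  'n \<Rightarrow> N             (sum_i xi_i (x) U_i)       *)

definition tens :: "('k::comm_ring_1 \<Rightarrow> 'b::zero \<Rightarrow> 'b) \<Rightarrow> ('n,'k) sym \<Rightarrow> 'b \<Rightarrow> ('n mon \<Rightarrow>\<^sub>0 'b)" where
  "tens s f x = Poly_Mapping.map (\<lambda>c. s c x) f"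

definition vtens :: "'n \<Rightarrow> 'b::zero \<Rightarrow> ('n \<Rightarrow> 'b)" where
  "vtens i y = (\<lambda>j. if j = i then y else 0)"

definition amap :: "(('n::finite \<Rightarrow> ('n,'k::comm_ring_1) sym) \<Rightarrow> 'm::comm_monoid_add \<Rightarrow> 'm) \<Rightarrow> ('n mon \<Rightarrow>\<^sub>0 'm) \<Rightarrow> ('n \<Rightarrow> 'm)" where
  "amap mu T = (\<Sum>m\<in>Poly_Mapping.keys T. \<Sum>i\<in>UNIV. vtens i (mu (vf (monom m) i) (Poly_Mapping.lookup T m)))"

definition tauSV :: "('n mon \<Rightarrow>\<^sub>0 ('v \<Rightarrow> 'b::zero)) \<Rightarrow> ('v \<Rightarrow> ('n mon \<Rightarrow>\<^sub>0 'b))" where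
  "tauSV U = (\<lambda>i. Poly_Mapping.map (\<lambda>v. v i) U)"

definition tauSS :: "('n mon \<Rightarrow>\<^sub>0 ('n mon \<Rightarrow>\<^sub>0 'm::comm_monoid_add)) \<Rightarrow> ('n mon \<Rightarrow>\<^sub>0 ('n mon \<Rightarrow>\<^sub>0 'm))" where
  "tauSS T = (\<Sum>m1\<in>Poly_Mapping.keys T. \<Sum>m2\<in>Poly_Mapping.keys (Poly_Mapping.lookup T m1).
                 Poly_Mapping.single m2 (Poly_Mapping.single m1 (Poly_Mapping.lookup (Poly_Mapping.lookup T m1) m2)))"

definition tauVV :: "('n \<Rightarrow> 'n \<Rightarrow> 'm) \<Rightarrow> ('n \<Rightarrow> 'n \<Rightarrow> 'm)" where
  "tauVV U = (\<lambda>i j. U j i)"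

definition deltaM :: "('k::comm_ring_1 \<Rightarrow> 'm::comm_monoid_add \<Rightarrow> 'm) \<Rightarrow> ('n mon \<Rightarrow>\<^sub>0 'm) \<Rightarrow> ('n \<Rightarrow> ('n mon \<Rightarrow>\<^sub>0 'm))" where
  "deltaM smul T = (\<lambda>i. \<Sum>m\<in>Poly_Mapping.keys T. tens smul (pd i (monom m)) (Poly_Mapping.lookup T m))"

definition multM :: "('k::comm_ring_1 \<Rightarrow> 'm::comm_monoid_add \<Rightarrow> 'm) \<Rightarrow> ('n mon \<Rightarrow>\<^sub>0 ('n mon \<Rightarrow>\<^sub>0 'm)) \<Rightarrow> ('n mon \<Rightarrow>\<^sub>0 'm)" where
  "multM smul T = (\<Sum>m1\<in>Poly_Mapping.keys T. \<Sum>m2\<in>Poly_Mapping.keys (Poly_Mapping.lookup T m1).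
                     tens smul (monom m1 * monom m2) (Poly_Mapping.lookup (Poly_Mapping.lookup T m1) m2))"

(* a_2 = id_Sym (x) a : Sym (x) Sym (x) M -> Sym (x) V (x) M *)
definition a2_SS where "a2_SS mu T = Poly_Mapping.map (amap mu) T"
(* a_1 = tau (id_V (x) a) tau : Sym (x) V (x) M -> V (x) V (x) M *)
definition a1_SV where "a1_SV mu S = tauVV (\<lambda>i. amap mu (tauSV S i))"
(* a_1 = tau (id_Sym (x) a) tau : Sym (x) Sym (x) M -> V (x) Sym (x) M *)
definition a1_SS where "a1_SS mu T = tauSV (Poly_Mapping.map (amap mu) (tauSS T))"
(* a_2 = id_V (x) a : V (x) Sym (x) M -> V (x) V (x) M *)
definition a2_VS where "a2_VS mu W = (\<lambda>i. amap mu (W i))"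

definition comm_a where
  "comm_a mu T = (\<lambda>i j. a1_SV mu (a2_SS mu T) i j - a2_VS mu (a1_SS mu T) i j)"

(* a' = (id (x) a) o (id (x) m (x) id) o (tau (x) id (x) id) o (id (x) Delta (x) id) *)
definition a_prime where
  "a_prime smul mu T = (\<lambda>i. amap mu (multM smul (tauSV (Poly_Mapping.map (deltaM smul) T) i)))"

definition a_dprime where
  "a_dprime smul mu T = tauVV (a_prime smul mu (tauSS T))"

end

theory Submission
  imports Defs
begin

text \<open>On a pure tensor \<open>\<xi>\<^sup>m \<otimes> \<xi>\<^sup>m\<^sup>' \<otimes> x\<close>, the \<open>(i, j)\<close> component of \<open>[a\<^sub>1, a\<^sub>2]\<close> is
  \<open>\<mu>(X)\<mu>(Y)x - \<mu>(Y)\<mu>(X)x\<close> with \<open>X = \<xi>\<^sup>m\<partial>\<^sub>i\<close> and \<open>Y = \<xi>\<^sup>m\<^sup>'\<partial>\<^sub>j\<close>, while that of \<open>a' - a''\<close>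
  is \<open>\<mu>(\<xi>\<^sup>m (\<partial>\<xi>\<^sup>m\<^sup>'/\<partial>\<xi>\<^sub>i) \<partial>\<^sub>j)x - \<mu>(\<xi>\<^sup>m\<^sup>' (\<partial>\<xi>\<^sup>m/\<partial>\<xi>\<^sub>j) \<partial>\<^sub>i)x = \<mu>([X, Y])x\<close>.
  Hence \<open>[a\<^sub>1, a\<^sub>2] = a' - a''\<close> says precisely that the defect
  \<open>\<mu>(X)\<mu>(Y) - \<mu>(Y)\<mu>(X) - \<mu>([X, Y])\<close> vanishes for monomial vector fields \<open>X\<close>, \<open>Y\<close>.
  Since the defect is additive in \<open>X\<close> and \<open>Y\<close> and commutes with scalars, and the fields
  \<open>c \<xi>\<^sup>m \<partial>\<^sub>i\<close> span \<open>W(V)\<close> additively, this is equivalent to \<open>\<mu>\<close> being a representation.\<close>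

lemma lookup_map_eq:
  "g 0 = 0 \<Longrightarrow> Poly_Mapping.lookup (Poly_Mapping.map g f) k = g (Poly_Mapping.lookup f k)"
  by (simp add: Poly_Mapping.map.rep_eq when_def)

lemma keys_map_subset: "Poly_Mapping.keys (Poly_Mapping.map g f) \<subseteq> Poly_Mapping.keys f"
  by (auto simp: in_keys_iff Poly_Mapping.map.rep_eq when_def)

lemma sum_single_lookup:
  "(\<Sum>m\<in>Poly_Mapping.keys f. Poly_Mapping.single m (Poly_Mapping.lookup f m)) = f"
  by (rule poly_mapping_eqI) (simp add: lookup_sum lookup_single when_def in_keys_iff)

lemma sum_apply: "sum f A x = (\<Sum>a\<in>A. f a x)"
  by (induction A rule: infinite_finite_induct) auto

abbreviation lookup2 :: "('a \<Rightarrow>\<^sub>0 ('b \<Rightarrow>\<^sub>0 'c::zero)) \<Rightarrow> 'a \<Rightarrow> 'b \<Rightarrow> 'c" where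
  "lookup2 T m m' \<equiv> Poly_Mapping.lookup (Poly_Mapping.lookup T m) m'"

text \<open>The expansions below are taken over arbitrary finite supersets \<open>A\<close>, \<open>B\<close> of the support,
  so that they specialise both to the actual support and to a single pure tensor.\<close>

definition supported_in :: "'a set \<Rightarrow> 'b set \<Rightarrow> ('a \<Rightarrow>\<^sub>0 ('b \<Rightarrow>\<^sub>0 'c::zero)) \<Rightarrow> bool" where
  "supported_in A B T \<longleftrightarrow> finite A \<and> finite B \<and> Poly_Mapping.keys T \<subseteq> A \<and>
     (\<forall>m. Poly_Mapping.keys (Poly_Mapping.lookup T m) \<subseteq> B)"

lemma supported_in_keys:
  "supported_in (Poly_Mapping.keys T) (\<Union>m\<in>Poly_Mapping.keys T. Poly_Mapping.keys (Poly_Mapping.lookup T m)) T"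
  unfolding supported_in_def by (auto simp: in_keys_iff) (metis in_keys_iff lookup_zero)

lemma supported_in_single:
  "supported_in {m} {m'} (Poly_Mapping.single m (Poly_Mapping.single m' y))"
  by (auto simp: supported_in_def lookup_single when_def)

lemma lookup2_tauSS: "lookup2 (tauSS T) m' m = lookup2 T m m'"
proof -
  have "lookup2 (tauSS T) m' m
     = (\<Sum>m1\<in>Poly_Mapping.keys T. \<Sum>m2\<in>Poly_Mapping.keys (Poly_Mapping.lookup T m1).
          if m2 = m' \<and> m1 = m then lookup2 T m1 m2 else 0)"
    unfolding tauSS_def lookup_sum
    by (intro sum.cong refl) (auto simp: lookup_single when_def)
  also have "\<dots> = (\<Sum>m1\<in>Poly_Mapping.keys T. if m1 = m then lookup2 T m1 m' else 0)"
    by (intro sum.cong refl) (auto simp: in_keys_iff)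
  also have "\<dots> = lookup2 T m m'"
    by (auto simp: in_keys_iff)
  finally show ?thesis .
qed

lemma supported_in_tauSS:
  assumes "supported_in A B T"
  shows "supported_in B A (tauSS T)"
proof -
  have support: "m \<in> A" "m' \<in> B" if "lookup2 T m m' \<noteq> 0" for m m'
  proof -
    have "m \<in> Poly_Mapping.keys T" "m' \<in> Poly_Mapping.keys (Poly_Mapping.lookup T m)"
      using that by (auto simp: in_keys_iff)
    then show "m \<in> A" "m' \<in> B"
      using assms by (auto simp: supported_in_def)
  qed
  have "Poly_Mapping.keys (tauSS T) \<subseteq> B"
  proof
    fix m' assume "m' \<in> Poly_Mapping.keys (tauSS T)"
    then obtain m where "lookup2 (tauSS T) m' m \<noteq> 0"
      by (metis in_keys_iff lookup_zero poly_mapping_eqI)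
    then show "m' \<in> B"
      using support by (simp add: lookup2_tauSS)
  qed
  moreover have "Poly_Mapping.keys (Poly_Mapping.lookup (tauSS T) m') \<subseteq> A" for m'
    using support by (auto simp: in_keys_iff lookup2_tauSS)
  ultimately show ?thesis
    using assms by (simp add: supported_in_def)
qed

lemma lookup_pd:
  "Poly_Mapping.lookup (pd i p) q
     = of_nat (Poly_Mapping.lookup q i + 1) * Poly_Mapping.lookup p (q + Poly_Mapping.single i 1)"
proof -
  let ?c = "\<lambda>q. of_nat (Poly_Mapping.lookup q i + 1) * Poly_Mapping.lookup p (q + Poly_Mapping.single i 1)"
  have "{q. ?c q \<noteq> 0} \<subseteq> (\<lambda>r. r - Poly_Mapping.single i 1) ` Poly_Mapping.keys p"
  proof
    fix q assume "q \<in> {q. ?c q \<noteq> 0}"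
    then have "q + Poly_Mapping.single i 1 \<in> Poly_Mapping.keys p"
      by (auto simp: in_keys_iff)
    then show "q \<in> (\<lambda>r. r - Poly_Mapping.single i 1) ` Poly_Mapping.keys p"
      by (rule rev_image_eqI) simp
  qed
  then have "finite {q. ?c q \<noteq> 0}"
    by (rule finite_subset) simp
  then show ?thesis unfolding pd_def by simp
qed

lemma pd_add: "pd i (p + q) = pd i p + pd i q"
  by (rule poly_mapping_eqI) (simp add: lookup_pd lookup_add distrib_left)

lemma pd_zero [simp]: "pd i 0 = 0"
  by (rule poly_mapping_eqI) (simp add: lookup_pd)

lemma kscale_eq_single_mult: "kscale c p = Poly_Mapping.single 0 c * p"
  unfolding kscale_def by (rule mult_map_scale_conv_mult)

lemma kscale_zero [simp]: "kscale c 0 = 0"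
  by (rule poly_mapping_eqI) (simp add: kscale_def lookup_map_eq)

lemma kscale_monom: "kscale c (monom m) = Poly_Mapping.single m c"
  by (simp add: kscale_def monom_def)

lemma pd_single_zero_mult: "pd i (Poly_Mapping.single 0 c * p) = Poly_Mapping.single 0 c * pd i p"
  unfolding kscale_eq_single_mult[symmetric]
  by (rule poly_mapping_eqI) (simp add: lookup_pd kscale_def lookup_map_eq mult.left_commute)

lemma wbracket_vf: "wbracket (vf f i) (vf g j) = genbr f i g j"
proof -
  have "genbr (vf f i a) a (vf g j b) b l = (if b = j then if a = i then genbr f i g j l else 0 else 0)"
    for a b l
    by (auto simp: vf_def genbr_def)
  then show ?thesis
    unfolding wbracket_def by (simp add: fun_eq_iff)
qed

lemma genbr_eq_vf_diff: "genbr f i g j = (\<lambda>l. vf (f * pd i g) j l - vf (g * pd j f) i l)"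
  by (auto simp: genbr_def vf_def)

lemma genbr_add_left: "genbr (f + f') i g j l = genbr f i g j l + genbr f' i g j l"
  by (auto simp: genbr_def pd_add algebra_simps)

lemma genbr_add_right: "genbr f i (g + g') j l = genbr f i g j l + genbr f i g' j l"
  by (auto simp: genbr_def pd_add algebra_simps)

lemma genbr_kscale_left: "genbr (kscale c f) i g j l = kscale c (genbr f i g j l)"
  by (simp add: genbr_def kscale_eq_single_mult pd_single_zero_mult) (simp add: algebra_simps)

lemma genbr_kscale_right: "genbr f i (kscale c g) j l = kscale c (genbr f i g j l)"
  by (simp add: genbr_def kscale_eq_single_mult pd_single_zero_mult) (simp add: algebra_simps)

lemma wbracket_add_left: "wbracket (\<lambda>l. X l + X' l) Y = (\<lambda>l. wbracket X Y l + wbracket X' Y l)"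
  unfolding wbracket_def by (simp add: genbr_add_left sum.distrib)

lemma wbracket_add_right: "wbracket X (\<lambda>l. Y l + Y' l) = (\<lambda>l. wbracket X Y l + wbracket X Y' l)"
  unfolding wbracket_def by (simp add: genbr_add_right sum.distrib)

lemma wbracket_kscale_left: "wbracket (\<lambda>l. kscale c (X l)) Y = (\<lambda>l. kscale c (wbracket X Y l))"
  unfolding wbracket_def genbr_kscale_left by (simp add: kscale_eq_single_mult sum_distrib_left)

lemma wbracket_kscale_right: "wbracket X (\<lambda>l. kscale c (Y l)) = (\<lambda>l. kscale c (wbracket X Y l))"
  unfolding wbracket_def genbr_kscale_right by (simp add: kscale_eq_single_mult sum_distrib_left)

lemma vf_single_eq_kscale: "vf (Poly_Mapping.single m c) i = (\<lambda>l. kscale c (vf (monom m) i l))"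
  by (auto simp: vf_def kscale_monom)

lemma additive_on_W_eq_0:
  fixes Phi :: "('n::finite \<Rightarrow> ('n,'k::comm_ring_1) sym) \<Rightarrow> 'a::cancel_comm_monoid_add"
  assumes add: "\<And>X Y. Phi (\<lambda>l. X l + Y l) = Phi X + Phi Y"
    and basis: "\<And>m c i. Phi (vf (Poly_Mapping.single m c) i) = 0"
  shows "Phi X = 0"
proof -
  have "Phi (\<lambda>l. 0) = 0"
    using add[of "\<lambda>l. 0" "\<lambda>l. 0"] by simp
  then have Phi_sum: "Phi (\<lambda>l. \<Sum>a\<in>A. Z a l) = (\<Sum>a\<in>A. Phi (Z a))" for A :: "'b set" and Z
    by (induction A rule: infinite_finite_induct) (simp_all add: add)
  have Phi_vf: "Phi (vf f i) = 0" for f i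
  proof -
    have "vf f i = (\<lambda>l. \<Sum>m\<in>Poly_Mapping.keys f. vf (Poly_Mapping.single m (Poly_Mapping.lookup f m)) i l)"
      by (auto simp: vf_def sum_single_lookup)
    then show ?thesis
      by (simp add: Phi_sum basis)
  qed
  have "Phi X = Phi (\<lambda>l. \<Sum>i\<in>UNIV. vf (X i) i l)"
    by (rule arg_cong[where f = Phi]) (auto simp: vf_def)
  also have "\<dots> = 0"
    by (simp add: Phi_sum Phi_vf)
  finally show ?thesis .
qed

definition bilinear_Sym :: "('k::comm_ring_1 \<Rightarrow> 'm::ab_group_add \<Rightarrow> 'm) \<Rightarrow> (('n,'k) sym \<Rightarrow> 'm \<Rightarrow> 'm) \<Rightarrow> bool"
  where "bilinear_Sym smul F \<longleftrightarrow>
    (\<forall>f g x. F (f + g) x = F f x + F g x) \<and> (\<forall>c f x. F (kscale c f) x = smul c (F f x)) \<and>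
    (\<forall>f x y. F f (x + y) = F f x + F f y) \<and> (\<forall>c f x. F f (smul c x) = smul c (F f x))"

definition tensor_lift :: "(('n,'k::comm_ring_1) sym \<Rightarrow> 'a::zero \<Rightarrow> 'b::comm_monoid_add) \<Rightarrow> ('n mon \<Rightarrow>\<^sub>0 'a) \<Rightarrow> 'b"
  where "tensor_lift F T = (\<Sum>p\<in>Poly_Mapping.keys T. F (monom p) (Poly_Mapping.lookup T p))"

lemma tensor_lift_zero [simp]: "tensor_lift F 0 = 0"
  by (simp add: tensor_lift_def)

context
  fixes smul :: "'k::comm_ring_1 \<Rightarrow> 'm::ab_group_add \<Rightarrow> 'm"
    and F :: "('n,'k) sym \<Rightarrow> 'm \<Rightarrow> 'm"
  assumes F: "bilinear_Sym smul F"
begin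

lemma bilinear_Sym_zero_right: "F f 0 = 0"
  using F unfolding bilinear_Sym_def by (metis add_cancel_right_right)

lemma bilinear_Sym_zero_left: "F 0 x = 0"
  using F unfolding bilinear_Sym_def by (metis add_cancel_right_right)

lemma bilinear_Sym_sum_left: "F (sum g A) x = (\<Sum>a\<in>A. F (g a) x)"
  using F by (induction A rule: infinite_finite_induct) (simp_all add: bilinear_Sym_def bilinear_Sym_zero_left)

lemma tensor_lift_superset:
  "finite A \<Longrightarrow> Poly_Mapping.keys T \<subseteq> A \<Longrightarrow>
    tensor_lift F T = (\<Sum>p\<in>A. F (monom p) (Poly_Mapping.lookup T p))"
  unfolding tensor_lift_def
  by (rule sum.mono_neutral_left) (auto simp: in_keys_iff bilinear_Sym_zero_right)

lemma tensor_lift_add: "tensor_lift F (T + U) = tensor_lift F T + tensor_lift F U"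
  unfolding tensor_lift_def
  by (rule setsum_keys_plus_distrib) (use F in \<open>simp_all add: bilinear_Sym_def bilinear_Sym_zero_right\<close>)

lemma tensor_lift_sum: "tensor_lift F (sum T A) = (\<Sum>a\<in>A. tensor_lift F (T a))"
  by (induction A rule: infinite_finite_induct) (simp_all add: tensor_lift_add)

lemma tensor_lift_tens: "tensor_lift F (tens smul g x) = F g x"
proof -
  have "tensor_lift F (tens smul g x)
      = (\<Sum>p\<in>Poly_Mapping.keys g. F (monom p) (Poly_Mapping.lookup (tens smul g x) p))"
    by (rule tensor_lift_superset) (simp_all add: tens_def keys_map_subset)
  also have "\<dots> = (\<Sum>p\<in>Poly_Mapping.keys g. F (monom p) (smul (Poly_Mapping.lookup g p) x))"
    by (rule sum.cong) (auto simp: tens_def Poly_Mapping.map.rep_eq in_keys_iff when_def)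
  also have "\<dots> = (\<Sum>p\<in>Poly_Mapping.keys g. F (Poly_Mapping.single p (Poly_Mapping.lookup g p)) x)"
    using F by (simp add: bilinear_Sym_def kscale_monom[symmetric])
  also have "\<dots> = F g x"
    by (simp add: bilinear_Sym_sum_left[symmetric] sum_single_lookup)
  finally show ?thesis .
qed

end

lemma amap_eq_tensor_lift: "amap mu T j = tensor_lift (\<lambda>f. mu (vf f j)) T"
  unfolding amap_def tensor_lift_def vtens_def vf_def
  by (simp add: sum_apply)

lemma amap_zero [simp]: "amap mu 0 = 0"
  by (simp add: amap_def zero_fun_def)

lemma deltaM_zero [simp]: "deltaM smul 0 = 0"
  by (simp add: deltaM_def zero_fun_def)

definition rep_defect
  :: "(('n::finite \<Rightarrow> ('n,'k::comm_ring_1) sym) \<Rightarrow> 'm::ab_group_add \<Rightarrow> 'm) \<Rightarrow> ('n \<Rightarrow> ('n,'k) sym) \<Rightarrow> ('n \<Rightarrow> ('n,'k) sym) \<Rightarrow> 'm \<Rightarrow> 'm"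
  where "rep_defect mu X Y x = mu X (mu Y x) - mu Y (mu X x) - mu (wbracket X Y) x"

lemma is_representation_iff_rep_defect:
  "is_representation mu \<longleftrightarrow> (\<forall>X Y x. rep_defect mu X Y x = 0)"
  by (auto simp: is_representation_def rep_defect_def)

context
  fixes smul :: "'k::field \<Rightarrow> 'm::ab_group_add \<Rightarrow> 'm"
    and mu :: "('n::finite \<Rightarrow> ('n,'k) sym) \<Rightarrow> 'm \<Rightarrow> 'm"
  assumes mu: "bilinear_mu smul mu"
begin

lemma mu_add_left: "mu (\<lambda>l. X l + Y l) x = mu X x + mu Y x"
  using mu by (simp add: bilinear_mu_def)

lemma mu_kscale_left: "mu (\<lambda>l. kscale c (X l)) x = smul c (mu X x)"
  using mu by (simp add: bilinear_mu_def)

lemma mu_add_right: "mu X (x + y) = mu X x + mu X y"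
  using mu by (simp add: bilinear_mu_def)

lemma mu_smul_right: "mu X (smul c x) = smul c (mu X x)"
  using mu by (simp add: bilinear_mu_def)

lemma mu_diff_left: "mu (\<lambda>l. X l - Y l) x = mu X x - mu Y x"
  using mu_add_left[of "\<lambda>l. X l - Y l" Y x] by (simp add: eq_diff_eq)

lemma mu_zero_right [simp]: "mu X 0 = 0"
  using mu_add_right[of X 0 0] by simp

lemma mu_sum_right: "mu X (sum g A) = (\<Sum>a\<in>A. mu X (g a))"
  by (induction A rule: infinite_finite_induct) (simp_all add: mu_add_right)

lemma bilinear_Sym_mu_vf_mult: "bilinear_Sym smul (\<lambda>f. mu (vf (h * f) j))"
proof -
  have "vf (h * (f + g)) j = (\<lambda>l. vf (h * f) j l + vf (h * g) j l)" for f g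
    by (auto simp: vf_def distrib_left)
  moreover have "vf (h * kscale c f) j = (\<lambda>l. kscale c (vf (h * f) j l))" for c f
    by (auto simp: vf_def kscale_eq_single_mult mult.left_commute)
  ultimately show ?thesis
    by (simp add: bilinear_Sym_def mu_add_left mu_kscale_left mu_add_right mu_smul_right)
qed

lemma bilinear_Sym_mu_vf: "bilinear_Sym smul (\<lambda>f. mu (vf f j))"
  using bilinear_Sym_mu_vf_mult[of 1 j] by simp

lemma amap_superset:
  "finite A \<Longrightarrow> Poly_Mapping.keys T \<subseteq> A \<Longrightarrow>
    amap mu T j = (\<Sum>p\<in>A. mu (vf (monom p) j) (Poly_Mapping.lookup T p))"
  by (simp add: amap_eq_tensor_lift tensor_lift_superset[OF bilinear_Sym_mu_vf])

lemma comm_a_expansion: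
  assumes "supported_in A B T"
  shows "comm_a mu T i j = (\<Sum>m\<in>A. \<Sum>m'\<in>B.
    mu (vf (monom m) i) (mu (vf (monom m') j) (lookup2 T m m'))
      - mu (vf (monom m') j) (mu (vf (monom m) i) (lookup2 T m m')))"
proof -
  have A: "finite A" "Poly_Mapping.keys T \<subseteq> A"
    and B: "finite B" "\<And>m. Poly_Mapping.keys (Poly_Mapping.lookup T m) \<subseteq> B"
    using assms by (auto simp: supported_in_def)
  have tau: "supported_in B A (tauSS T)"
    using assms by (rule supported_in_tauSS)
  define S where "S = tauSV (a2_SS mu T) j"
  have S: "Poly_Mapping.lookup S m = (\<Sum>m'\<in>B. mu (vf (monom m') j) (lookup2 T m m'))" for m
    by (simp add: S_def tauSV_def a2_SS_def lookup_map_eq amap_superset[OF B])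
  have keys_S: "Poly_Mapping.keys S \<subseteq> A"
    using A(2) keys_map_subset[of _ T] keys_map_subset[of _ "a2_SS mu T"]
    by (force simp: S_def tauSV_def a2_SS_def)
  have a1_a2: "a1_SV mu (a2_SS mu T) i j
      = (\<Sum>m\<in>A. \<Sum>m'\<in>B. mu (vf (monom m) i) (mu (vf (monom m') j) (lookup2 T m m')))"
    unfolding a1_SV_def tauVV_def S_def[symmetric] amap_superset[OF A(1) keys_S] S mu_sum_right ..
  define R where "R = tauSV (Poly_Mapping.map (amap mu) (tauSS T)) i"
  have R: "Poly_Mapping.lookup R m' = (\<Sum>m\<in>A. mu (vf (monom m) i) (lookup2 T m m'))" for m'
    using tau by (simp add: R_def tauSV_def lookup_map_eq amap_superset[OF A(1)] supported_in_def lookup2_tauSS)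
  have keys_R: "Poly_Mapping.keys R \<subseteq> B"
    using tau keys_map_subset[of _ "tauSS T"] keys_map_subset[of _ "Poly_Mapping.map (amap mu) (tauSS T)"]
    by (force simp: R_def tauSV_def supported_in_def)
  have a2_a1: "a2_VS mu (a1_SS mu T) i j
      = (\<Sum>m\<in>A. \<Sum>m'\<in>B. mu (vf (monom m') j) (mu (vf (monom m) i) (lookup2 T m m')))"
    unfolding a2_VS_def a1_SS_def R_def[symmetric] amap_superset[OF B(1) keys_R] R mu_sum_right
    by (rule sum.swap)
  show ?thesis
    unfolding comm_a_def a1_a2 a2_a1 by (simp only: sum_subtractf)
qed

lemma a_prime_expansion:
  assumes "supported_in A B T"
  shows "a_prime smul mu T i j
    = (\<Sum>m\<in>A. \<Sum>m'\<in>B. mu (vf (monom m * pd i (monom m')) j) (lookup2 T m m'))"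
proof -
  have A: "finite A" "Poly_Mapping.keys T \<subseteq> A"
    and B: "finite B" "\<And>m. Poly_Mapping.keys (Poly_Mapping.lookup T m) \<subseteq> B"
    using assms by (auto simp: supported_in_def)
  define U where "U = tauSV (Poly_Mapping.map (deltaM smul) T) i"
  have U: "Poly_Mapping.lookup U m = (\<Sum>m'\<in>Poly_Mapping.keys (Poly_Mapping.lookup T m).
      tens smul (pd i (monom m')) (lookup2 T m m'))" for m
    by (simp add: U_def tauSV_def lookup_map_eq, simp add: deltaM_def)
  have keys_U: "Poly_Mapping.keys U \<subseteq> A"
    using A(2) keys_map_subset[of _ T] keys_map_subset[of _ "Poly_Mapping.map (deltaM smul) T"]
    by (force simp: U_def tauSV_def)
  have "a_prime smul mu T i j = tensor_lift (\<lambda>f. mu (vf f j)) (multM smul U)"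
    by (simp add: a_prime_def U_def amap_eq_tensor_lift)
  also have "\<dots> = (\<Sum>m\<in>Poly_Mapping.keys U. tensor_lift (\<lambda>f. mu (vf (monom m * f) j)) (Poly_Mapping.lookup U m))"
    unfolding multM_def tensor_lift_sum[OF bilinear_Sym_mu_vf] tensor_lift_tens[OF bilinear_Sym_mu_vf]
    by (simp add: tensor_lift_def)
  also have "\<dots> = (\<Sum>m\<in>A. tensor_lift (\<lambda>f. mu (vf (monom m * f) j)) (Poly_Mapping.lookup U m))"
    by (rule sum.mono_neutral_left) (use A(1) keys_U in \<open>auto simp: in_keys_iff\<close>)
  also have "\<dots> = (\<Sum>m\<in>A. \<Sum>m'\<in>B. mu (vf (monom m * pd i (monom m')) j) (lookup2 T m m'))"
  proof (rule sum.cong [OF refl])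
    fix m
    have "tensor_lift (\<lambda>f. mu (vf (monom m * f) j)) (Poly_Mapping.lookup U m)
        = (\<Sum>m'\<in>Poly_Mapping.keys (Poly_Mapping.lookup T m). mu (vf (monom m * pd i (monom m')) j) (lookup2 T m m'))"
      by (simp add: U tensor_lift_sum[OF bilinear_Sym_mu_vf_mult] tensor_lift_tens[OF bilinear_Sym_mu_vf_mult])
    also have "\<dots> = (\<Sum>m'\<in>B. mu (vf (monom m * pd i (monom m')) j) (lookup2 T m m'))"
      by (rule sum.mono_neutral_left) (use B in \<open>auto simp: in_keys_iff\<close>)
    finally show "tensor_lift (\<lambda>f. mu (vf (monom m * f) j)) (Poly_Mapping.lookup U m)
        = (\<Sum>m'\<in>B. mu (vf (monom m * pd i (monom m')) j) (lookup2 T m m'))" .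
  qed
  finally show ?thesis .
qed

lemma a_dprime_expansion:
  assumes "supported_in A B T"
  shows "a_dprime smul mu T i j
    = (\<Sum>m\<in>A. \<Sum>m'\<in>B. mu (vf (monom m' * pd j (monom m)) i) (lookup2 T m m'))"
  unfolding a_dprime_def tauVV_def a_prime_expansion[OF supported_in_tauSS[OF assms]] lookup2_tauSS
  by (rule sum.swap)

lemma rep_defect_vf:
  "rep_defect mu (vf f i) (vf g j) y
    = mu (vf f i) (mu (vf g j) y) - mu (vf g j) (mu (vf f i) y)
      - (mu (vf (f * pd i g) j) y - mu (vf (g * pd j f) i) y)"
  by (simp add: rep_defect_def wbracket_vf genbr_eq_vf_diff mu_diff_left)

lemma a_identity_defect_expansion:
  assumes "supported_in A B T"
  shows "comm_a mu T i j - (a_prime smul mu T i j - a_dprime smul mu T i j)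
    = (\<Sum>m\<in>A. \<Sum>m'\<in>B. rep_defect mu (vf (monom m) i) (vf (monom m') j) (lookup2 T m m'))"
  unfolding comm_a_expansion[OF assms] a_prime_expansion[OF assms] a_dprime_expansion[OF assms]
    rep_defect_vf
  by (simp add: sum_subtractf)

lemma a_identity_iff_basis_rep_defect:
  "(\<forall>T. comm_a mu T = (\<lambda>i j. a_prime smul mu T i j - a_dprime smul mu T i j))
    \<longleftrightarrow> (\<forall>m i m' j y. rep_defect mu (vf (monom m) i) (vf (monom m') j) y = 0)"
proof safe
  fix m i m' j y
  assume "\<forall>T. comm_a mu T = (\<lambda>i j. a_prime smul mu T i j - a_dprime smul mu T i j)"
  then show "rep_defect mu (vf (monom m) i) (vf (monom m') j) y = 0"
    using a_identity_defect_expansion[OF supported_in_single[of m m' y], of i j] by simp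
next
  fix T
  assume "\<forall>m i m' j y. rep_defect mu (vf (monom m) i) (vf (monom m') j) y = 0"
  then have "comm_a mu T i j - (a_prime smul mu T i j - a_dprime smul mu T i j) = 0" for i j
    by (simp add: a_identity_defect_expansion[OF supported_in_keys])
  then show "comm_a mu T = (\<lambda>i j. a_prime smul mu T i j - a_dprime smul mu T i j)"
    by (simp add: fun_eq_iff)
qed

lemma rep_defect_add_left:
  "rep_defect mu (\<lambda>l. X l + X' l) Y x = rep_defect mu X Y x + rep_defect mu X' Y x"
  unfolding rep_defect_def wbracket_add_left mu_add_left mu_add_right by (simp add: algebra_simps)

lemma rep_defect_add_right:
  "rep_defect mu X (\<lambda>l. Y l + Y' l) x = rep_defect mu X Y x + rep_defect mu X Y' x"
  unfolding rep_defect_def wbracket_add_right mu_add_left mu_add_right by (simp add: algebra_simps)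

context
  assumes "Vector_Spaces.vector_space smul"
begin

interpretation vector_space smul by fact

lemma rep_defect_kscale_left:
  "rep_defect mu (\<lambda>l. kscale c (X l)) Y x = smul c (rep_defect mu X Y x)"
  unfolding rep_defect_def wbracket_kscale_left mu_kscale_left mu_smul_right scale_right_diff_distrib ..

lemma rep_defect_kscale_right:
  "rep_defect mu X (\<lambda>l. kscale c (Y l)) x = smul c (rep_defect mu X Y x)"
  unfolding rep_defect_def wbracket_kscale_right mu_kscale_left mu_smul_right scale_right_diff_distrib ..

lemma rep_defect_eq_0_iff_basis:
  "(\<forall>X Y x. rep_defect mu X Y x = 0)
    \<longleftrightarrow> (\<forall>m i m' j y. rep_defect mu (vf (monom m) i) (vf (monom m') j) y = 0)"
proof (intro iffI allI)
  fix X Y x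
  assume basis: "\<forall>m i m' j y. rep_defect mu (vf (monom m) i) (vf (monom m') j) y = 0"
  have basis_left: "rep_defect mu (vf (monom m) i) Y' y = 0" for m i Y' y
    by (rule additive_on_W_eq_0[of "\<lambda>Y. rep_defect mu (vf (monom m) i) Y y"])
      (simp_all add: rep_defect_add_right vf_single_eq_kscale rep_defect_kscale_right basis)
  show "rep_defect mu X Y x = 0"
    by (rule additive_on_W_eq_0[of "\<lambda>X. rep_defect mu X Y x"])
      (simp_all add: rep_defect_add_left vf_single_eq_kscale rep_defect_kscale_left basis_left)
qed simp

end

end

theorem proposition6p2:
  fixes smul :: "'k::field \<Rightarrow> 'm::ab_group_add \<Rightarrow> 'm"
    and mu :: "('n::finite \<Rightarrow> ('n,'k) sym) \<Rightarrow> 'm \<Rightarrow> 'm"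
  assumes "Vector_Spaces.vector_space smul"
    and "bilinear_mu smul mu"
  shows "is_representation mu \<longleftrightarrow>
    (\<forall>T :: 'n mon \<Rightarrow>\<^sub>0 ('n mon \<Rightarrow>\<^sub>0 'm).
       comm_a mu T = (\<lambda>i j. a_prime smul mu T i j - a_dprime smul mu T i j))"
proof -
  have "is_representation mu \<longleftrightarrow> (\<forall>X Y x. rep_defect mu X Y x = 0)"
    by (rule is_representation_iff_rep_defect)
  also have "\<dots> \<longleftrightarrow> (\<forall>m i m' j y. rep_defect mu (vf (monom m) i) (vf (monom m') j) y = 0)"
    by (rule rep_defect_eq_0_iff_basis[OF assms(2,1)])
  also have "\<dots> \<longleftrightarrow> (\<forall>T :: 'n mon \<Rightarrow>\<^sub>0 ('n mon \<Rightarrow>\<^sub>0 'm).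
      comm_a mu T = (\<lambda>i j. a_prime smul mu T i j - a_dprime smul mu T i j))"
    by (rule a_identity_iff_basis_rep_defect[OF assms(2), symmetric])
  finally show ?thesis .
qed

end
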